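(* Let $M$ be an infinite subset of $\mathbb{N}$ and let $k,l\in\mathbb{N}$. For every finite partition $\mathrm{Plm}_l([M]^k)=\bigcup_{j=1}^p P_j$ there exist an infinite $L\subseteq M$ and $1\le j_0\le p$ such that $\mathrm{Plm}_l([L]^k)\subseteq P_{j_0}$.
   Context: For $M\subseteq\mathbb{N}$ infinite and $k\in\mathbb{N}$, $[M]^k$ is the set of $k$-element subsets of $M$; an element $s\in[M]^k$ is identified with its increasing enumeration $s(1)<\dots<s(k)$. A finite sequence $(s_j)_{j=1}^l$ in $[M]^k$ is a plegma family if (i) for every $1\le i\le k$, $s_1(i)<s_2(i)<\dots<s_l(i)$, and (ii) for every $1\le i<k$, $s_l(i)<s_1(i+1)$. $\mathrm{Plm}_l([M]^k)$ denotes the set of all plegma families of length $l$ in $[M]^k$. *)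

theory Defs
  imports Main
begin

definition kSubsets :: "nat set \<Rightarrow> nat \<Rightarrow> nat set set" where
  "kSubsets M k = {s. s \<subseteq> M \<and> finite s \<and> card s = k}"

text \<open>s(i): the i-th element (1-indexed) of the increasing enumeration of a finite set s.\<close>
definition elem :: "nat set \<Rightarrow> nat \<Rightarrow> nat" where
  "elem s i = sorted_list_of_set s ! (i - 1)"

text \<open>A finite sequence s_1,...,s_l (list, s_j = ss ! (j-1)) of k-sets is plegma.\<close>
definition is_plegma :: "nat \<Rightarrow> nat set list \<Rightarrow> bool" where
  "is_plegma k ss \<longleftrightarrow>
     (\<forall>i\<in>{1..k}. \<forall>j. Suc j < length ss \<longrightarrow> elem (ss ! j) i < elem (ss ! Suc j) i) \<and>
     (ss \<noteq> [] \<longrightarrow> (\<forall>i. 1 \<le> i \<and> i < k \<longrightarrow> elem (last ss) i < elem (hd ss) (Suc i)))"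

definition Plm :: "nat \<Rightarrow> nat set \<Rightarrow> nat \<Rightarrow> nat set list set" where
  "Plm l M k = {ss. length ss = l \<and> set ss \<subseteq> kSubsets M k \<and> is_plegma k ss}"

end

theory Submission
  imports Defs "HOL-Library.Ramsey"
begin

(* Plegma families of length l in [L]^k are in bijection with the (k*l)-element
   subsets of L: write the elements x_0 < ... < x_(kl-1) of X row by row into a
   k x l matrix; its l columns s_j = {x_(i*l+j) | i < k} form a plegma family, and
   conversely the union of a plegma family, enumerated increasingly, is exactly
   the row-by-row reading of that matrix (plegma condition (i) says rows increase,
   condition (ii) says each row ends below the start of the next one).
   Hence a finite colouring of Plm_l([M]^k) induces a finite colouring of
   [M]^(kl), and the infinite Ramsey theorem yields an infinite L \<subseteq> M on which
   the induced colouring, and therefore the original one, is constant. *)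

lemma sorted_list_of_set_strict_image:
  fixes g :: "nat \<Rightarrow> nat"
  assumes "\<And>a b. a < b \<Longrightarrow> b < n \<Longrightarrow> g a < g b"
  shows "sorted_list_of_set (g ` {..<n}) = map g [0..<n]" and "card (g ` {..<n}) = n"
proof -
  have sorted: "sorted_wrt (<) (map g [0..<n])"
    using assms by (auto simp: sorted_wrt_iff_nth_less)
  then have "distinct (map g [0..<n])" using strict_sorted_iff by blast
  moreover have image: "set (map g [0..<n]) = g ` {..<n}" by auto
  ultimately show card: "card (g ` {..<n}) = n" using distinct_card by fastforce
  show "sorted_list_of_set (g ` {..<n}) = map g [0..<n]"
    using sorted_list_of_set_unique[of "g ` {..<n}" "map g [0..<n]"] sorted card image by simp
qed

lemma strict_increase_below:
  fixes f :: "nat \<Rightarrow> nat"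
  assumes step: "\<And>n. Suc n < N \<Longrightarrow> f n < f (Suc n)" and "a < b" "b < N"
  shows "f a < f b"
  using assms(2,3)
proof (induction b)
  case (Suc b)
  then have "f a \<le> f b" by (cases "a = b") auto
  also have "\<dots> < f (Suc b)" using step Suc.prems by simp
  finally show ?case .
qed simp

lemma set_eq_image_elem:
  assumes "finite s" "card s = k"
  shows "s = (\<lambda>i. elem s (i + 1)) ` {..<k}"
proof -
  have "s = set (sorted_list_of_set s)" using assms by simp
  also have "\<dots> = (\<lambda>i. sorted_list_of_set s ! i) ` {..<k}"
    using assms by (auto simp: set_conv_nth)
  finally show ?thesis by (simp add: elem_def)
qed

lemma row_major_index_less: "i < k \<Longrightarrow> j < l \<Longrightarrow> i * l + j < k * (l::nat)"
proof -
  assume "i < k" "j < l"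
  then have "i * l + j < (i + 1) * l" by simp
  also have "\<dots> \<le> k * l" using \<open>i < k\<close> by (intro mult_right_mono) auto
  finally show ?thesis .
qed

section \<open>From (k*l)-sets to plegma families\<close>

text \<open>The j-th column of the k x l matrix filled row by row with the elements of X.\<close>
definition column :: "nat \<Rightarrow> nat \<Rightarrow> nat set \<Rightarrow> nat \<Rightarrow> nat set" where
  "column k l X j = (\<lambda>i. sorted_list_of_set X ! (i * l + j)) ` {..<k}"

definition plegma_of :: "nat \<Rightarrow> nat \<Rightarrow> nat set \<Rightarrow> nat set list" where
  "plegma_of k l X = map (column k l X) [0..<l]"

lemma column_enumeration:
  assumes "finite X" "card X = k * l" "j < l"
  shows "sorted_list_of_set (column k l X j) = map (\<lambda>i. sorted_list_of_set X ! (i * l + j)) [0..<k]"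
    and "card (column k l X j) = k"
proof -
  let ?xs = "sorted_list_of_set X"
  have "?xs ! (a * l + j) < ?xs ! (b * l + j)" if "a < b" "b < k" for a b
    using that assms row_major_index_less[of b k j l]
    by (simp add: sorted_wrt_iff_nth_less[THEN iffD1, OF strict_sorted_list_of_set]
        mult_less_mono1)
  from sorted_list_of_set_strict_image[of k "\<lambda>i. ?xs ! (i * l + j)", OF this]
  show "sorted_list_of_set (column k l X j) = map (\<lambda>i. ?xs ! (i * l + j)) [0..<k]"
    "card (column k l X j) = k"
    unfolding column_def by blast+
qed

lemma elem_column:
  assumes "finite X" "card X = k * l" "j < l" "1 \<le> i" "i \<le> k"
  shows "elem (column k l X j) i = sorted_list_of_set X ! ((i - 1) * l + j)"
proof -
  have "i - 1 < k" using assms(4,5) by simp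
  then show ?thesis using column_enumeration(1)[OF assms(1-3)] by (simp add: elem_def)
qed

lemma plegma_of_in_Plm:
  assumes X: "X \<in> kSubsets L (k * l)"
  shows "plegma_of k l X \<in> Plm l L k"
proof -
  let ?xs = "sorted_list_of_set X" and ?ss = "plegma_of k l X"
  have fin: "finite X" and card: "card X = k * l" and sub: "X \<subseteq> L"
    using X by (auto simp: kSubsets_def)
  have lt: "?xs ! a < ?xs ! b" if "a < b" "b < k * l" for a b
    using that fin card by (simp add: sorted_wrt_iff_nth_less[THEN iffD1, OF strict_sorted_list_of_set])
  have columns: "column k l X j \<in> kSubsets L k" if "j < l" for j
  proof -
    have "?xs ! n \<in> X" if "n < k * l" for n
      using that fin card nth_mem[of n ?xs] by simp
    then have "column k l X j \<subseteq> X"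
      using \<open>j < l\<close> row_major_index_less[of _ k j l] by (auto simp: column_def)
    then show ?thesis using column_enumeration(2)[OF fin card that] sub fin
      by (auto simp: kSubsets_def intro: finite_subset)
  qed
  have rows_increase: "elem (?ss ! j) i < elem (?ss ! Suc j) i"
    if "i \<in> {1..k}" "Suc j < length ?ss" for i j
  proof -
    have "Suc j < l" using that by (simp add: plegma_of_def)
    then have "(i - 1) * l + Suc j < k * l"
      using that row_major_index_less[of "i - 1" k "Suc j" l] by auto
    then show ?thesis
      using that \<open>Suc j < l\<close> elem_column[OF fin card] lt[of "(i - 1) * l + j"]
      by (simp add: plegma_of_def)
  qed
  have rows_separated: "elem (last ?ss) i < elem (hd ?ss) (Suc i)"
    if "?ss \<noteq> []" "1 \<le> i" "i < k" for i
  proof -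
    have l: "0 < l" using that by (simp add: plegma_of_def)
    have "last ?ss = column k l X (l - 1)" "hd ?ss = column k l X 0"
      using l by (simp_all add: plegma_of_def last_map hd_map)
    moreover have "(i - 1) * l + (l - 1) < i * l + 0"
      using that l by (cases i) auto
    ultimately show ?thesis
      using that l elem_column[OF fin card] lt row_major_index_less[of i k 0 l] by simp
  qed
  show ?thesis unfolding Plm_def is_plegma_def
    using columns rows_increase rows_separated by (auto simp: plegma_of_def)
qed

section \<open>From plegma families back to (k*l)-sets\<close>

text \<open>The entry at row-major position n of the matrix whose columns are ss.\<close>
definition plegma_enum :: "nat \<Rightarrow> nat set list \<Rightarrow> nat \<Rightarrow> nat" where
  "plegma_enum l ss n = elem (ss ! (n mod l)) (n div l + 1)"

text \<open>Reading a plegma family row by row is strictly increasing: inside a row by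
  condition (i), across rows by condition (ii).\<close>
lemma plegma_enum_step:
  assumes ss: "ss \<in> Plm l L k" and n: "Suc n < k * l"
  shows "plegma_enum l ss n < plegma_enum l ss (Suc n)"
proof -
  have l: "0 < l" using n by (cases l) auto
  have len: "length ss = l"
    and inc: "\<And>i j. i \<in> {1..k} \<Longrightarrow> Suc j < l \<Longrightarrow> elem (ss ! j) i < elem (ss ! Suc j) i"
    and sep: "\<And>i. 1 \<le> i \<Longrightarrow> i < k \<Longrightarrow> elem (last ss) i < elem (hd ss) (Suc i)"
    using ss l unfolding Plm_def is_plegma_def by auto
  define i j where "i = n div l" and "j = n mod l"
  have "j < l" using l by (simp add: j_def)
  have "i < k" using n by (simp add: i_def less_mult_imp_div_less)
  show ?thesis
  proof (cases "Suc j < l")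
    case True
    then have "Suc n mod l = Suc j" "Suc n div l = i"
      by (simp_all add: mod_Suc div_Suc i_def j_def)
    then show ?thesis using inc[of "i + 1" j] \<open>i < k\<close> True
      by (simp add: plegma_enum_def i_def j_def)
  next
    case False
    then have last_col: "Suc j = l" using \<open>j < l\<close> by simp
    then have next_pos: "Suc n mod l = 0" "Suc n div l = Suc i"
      by (simp_all add: mod_Suc div_Suc i_def j_def)
    have "n = i * l + j" by (simp add: i_def j_def)
    then have "Suc n = Suc i * l" using last_col by simp
    then have "Suc i * l < k * l" using n by simp
    then have "Suc i < k" by (simp only: mult_less_cancel2)
    moreover have "ss \<noteq> []" using len l by auto
    then have "last ss = ss ! j" "hd ss = ss ! 0"
      using len last_col[symmetric] by (simp_all add: last_conv_nth hd_conv_nth)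
    ultimately show ?thesis using sep[of "Suc i"] next_pos
      by (simp add: plegma_enum_def i_def j_def)
  qed
qed

lemma Union_plegma_eq_image:
  assumes ss: "ss \<in> Plm l L k" and l: "0 < l"
  shows "\<Union>(set ss) = plegma_enum l ss ` {..<k * l}"
proof -
  have len: "length ss = l" and cols: "\<And>j. j < l \<Longrightarrow> ss ! j \<in> kSubsets L k"
    using ss by (auto simp: Plm_def dest: nth_mem)
  have col_eq: "ss ! j = (\<lambda>i. plegma_enum l ss (i * l + j)) ` {..<k}" if "j < l" for j
    using set_eq_image_elem[of "ss ! j" k] cols[OF that] that
    by (simp add: kSubsets_def plegma_enum_def)
  have "\<Union>(set ss) = (\<Union>j<l. ss ! j)"
    unfolding len[symmetric] by (auto simp: in_set_conv_nth) (use nth_mem in blast)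
  also have "\<dots> = (\<Union>j<l. \<Union>i<k. {plegma_enum l ss (i * l + j)})"
    using col_eq by auto
  also have "\<dots> = plegma_enum l ss ` {..<k * l}"
  proof -
    have "n \<in> (\<lambda>(i, j). i * l + j) ` ({..<k} \<times> {..<l})" if "n < k * l" for n
      using that l by (intro image_eqI[of _ _ "(n div l, n mod l)"])
        (auto simp: less_mult_imp_div_less)
    then show ?thesis using row_major_index_less[of _ k _ l] by fastforce
  qed
  finally show ?thesis .
qed

lemma plegma_of_Union:
  assumes ss: "ss \<in> Plm l L k"
  shows "\<Union>(set ss) \<in> kSubsets L (k * l)" and "plegma_of k l (\<Union>(set ss)) = ss"
proof -
  have len: "length ss = l" and sub: "set ss \<subseteq> kSubsets L k"
    using ss by (auto simp: Plm_def)
  have "\<Union>(set ss) \<subseteq> L" using sub by (auto simp: kSubsets_def)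
  have "card (\<Union>(set ss)) = k * l \<and> plegma_of k l (\<Union>(set ss)) = ss"
  proof (cases "l = 0")
    case True
    then show ?thesis using len by (simp add: plegma_of_def)
  next
    case False
    let ?e = "plegma_enum l ss"
    have mono: "?e a < ?e b" if "a < b" "b < k * l" for a b
      using strict_increase_below[of "k * l" ?e a b] plegma_enum_step[OF ss] that by blast
    note U = Union_plegma_eq_image[OF ss] False
    have sorted: "sorted_list_of_set (\<Union>(set ss)) = map ?e [0..<k * l]"
      and card: "card (\<Union>(set ss)) = k * l"
      using sorted_list_of_set_strict_image[of "k * l" ?e, OF mono] U by auto
    have "column k l (\<Union>(set ss)) j = ss ! j" if "j < l" for j
    proof -
      have "column k l (\<Union>(set ss)) j = (\<lambda>i. ?e (i * l + j)) ` {..<k}"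
        unfolding column_def sorted using row_major_index_less that by auto
      also have "\<dots> = (\<lambda>i. elem (ss ! j) (i + 1)) ` {..<k}"
        using that by (simp add: plegma_enum_def)
      also have "\<dots> = ss ! j"
      proof -
        have "ss ! j \<in> kSubsets L k" using sub that len by auto
        then show ?thesis using set_eq_image_elem[of "ss ! j" k] by (simp add: kSubsets_def)
      qed
      finally show ?thesis .
    qed
    then have "plegma_of k l (\<Union>(set ss)) = ss"
      using len by (intro nth_equalityI) (auto simp: plegma_of_def)
    with card show ?thesis by simp
  qed
  moreover have "finite (\<Union>(set ss))" using sub by (auto simp: kSubsets_def)
  ultimately show "\<Union>(set ss) \<in> kSubsets L (k * l)" "plegma_of k l (\<Union>(set ss)) = ss"
    using \<open>\<Union>(set ss) \<subseteq> L\<close> by (auto simp: kSubsets_def)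
qed

lemma plegma_of_bij: "bij_betw (plegma_of k l) (kSubsets L (k * l)) (Plm l L k)"
proof (rule bij_betw_byWitness[where f' = "\<lambda>ss. \<Union>(set ss)"])
  show "\<forall>X\<in>kSubsets L (k * l). \<Union>(set (plegma_of k l X)) = X"
  proof
    fix X assume X: "X \<in> kSubsets L (k * l)"
    have "X \<in> kSubsets X (k * l)" using X by (simp add: kSubsets_def)
    then have "plegma_of k l X \<in> Plm l X k" by (rule plegma_of_in_Plm)
    \<comment> \<open>The union is a subset of X with as many elements as X.\<close>
    then have "\<Union>(set (plegma_of k l X)) \<in> kSubsets X (k * l)" by (rule plegma_of_Union)
    then show "\<Union>(set (plegma_of k l X)) = X"
      using X card_subset_eq[of X "\<Union>(set (plegma_of k l X))"] by (simp add: kSubsets_def)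
  qed
qed (auto intro: plegma_of_in_Plm plegma_of_Union)

lemma ramsey_kSubsets:
  fixes c :: "nat set \<Rightarrow> nat"
  assumes "infinite M" and colours: "\<And>X. X \<in> kSubsets M r \<Longrightarrow> c X \<in> {1..p}"
  obtains L j0 where "L \<subseteq> M" "infinite L" "j0 \<in> {1..p}"
    "\<And>X. X \<in> kSubsets L r \<Longrightarrow> c X = j0"
proof -
  have colours_on_subsets: "c X \<in> {1..p}" if "X \<subseteq> M" "finite X" "card X = r" for X
    using colours that by (simp add: kSubsets_def)
  have "c X - 1 < p" if "X \<subseteq> M \<and> finite X \<and> card X = r" for X
    using colours_on_subsets[of X] that by auto
  then have "\<forall>X. X \<subseteq> M \<and> finite X \<and> card X = r \<longrightarrow> c X - 1 < p" by blast
  from Ramsey[OF assms(1) this] obtain L t where L: "L \<subseteq> M" "infinite L" "t < p"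
    and const: "\<forall>X. X \<subseteq> L \<and> finite X \<and> card X = r \<longrightarrow> c X - 1 = t" by blast
  have constant_colour: "c X = t + 1" if "X \<in> kSubsets L r" for X
  proof -
    have "X \<subseteq> L" "finite X" "card X = r" using that by (auto simp: kSubsets_def)
    then have "c X \<in> {1..p}" "c X - 1 = t" using colours_on_subsets const L(1) by blast+
    then show ?thesis unfolding atLeastAtMost_iff by linarith
  qed
  show ?thesis
    by (rule that[of L "t + 1"]) (use L constant_colour in auto)
qed

theorem mainTheorem1:
  fixes M :: "nat set" and k l p :: nat and P :: "nat \<Rightarrow> nat set list set"
  assumes "infinite M"
    and "(\<Union>j\<in>{1..p}. P j) = Plm l M k"
    and "\<forall>i\<in>{1..p}. \<forall>j\<in>{1..p}. i \<noteq> j \<longrightarrow> P i \<inter> P j = {}"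
  shows "\<exists>L j0. L \<subseteq> M \<and> infinite L \<and> 1 \<le> j0 \<and> j0 \<le> p \<and> Plm l L k \<subseteq> P j0"
proof -
  define colour where "colour X = (SOME j. j \<in> {1..p} \<and> plegma_of k l X \<in> P j)" for X
  have colour: "colour X \<in> {1..p} \<and> plegma_of k l X \<in> P (colour X)"
    if "X \<in> kSubsets M (k * l)" for X
  proof -
    have "plegma_of k l X \<in> (\<Union>j\<in>{1..p}. P j)"
      using plegma_of_in_Plm[OF that] assms(2) by simp
    then show ?thesis unfolding colour_def by (rule someI_ex[OF UN_E]) blast
  qed
  obtain L j0 where L: "L \<subseteq> M" "infinite L" "j0 \<in> {1..p}"
    and const: "\<And>X. X \<in> kSubsets L (k * l) \<Longrightarrow> colour X = j0"
    using ramsey_kSubsets[OF assms(1), of "k * l" colour] colour by blast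
  have "Plm l L k \<subseteq> P j0"
  proof
    fix ss assume "ss \<in> Plm l L k"
    then obtain X where X: "X \<in> kSubsets L (k * l)" and "ss = plegma_of k l X"
      using plegma_of_bij[of k l L] by (auto simp: bij_betw_def)
    moreover have "X \<in> kSubsets M (k * l)" using X L(1) by (auto simp: kSubsets_def)
    ultimately show "ss \<in> P j0" using colour const by metis
  qed
  with L show ?thesis by auto
qed

end
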